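(* Fix constants $\gamma\in(0,1]$ and $K\ge1$. Let $L\ge 1$ and $d_0,\dots,d_L$ be positive integers with $\max_i d_i\le KL^{1-\gamma}$. Let $W_1,\dots,W_L$ be independent random matrices, $W_i\in\mathbb{R}^{d_i\times d_{i-1}}$ with i.i.d. $\mathcal N(0,\sigma_i^2)$ entries ($\sigma_i>0$), and set $A_i=W_i/(\sqrt{d_i}\sigma_i)$ and $A_{j:i}=A_jA_{j-1}\cdots A_i$ for $1\le i\le j\le L$. Then there is a constant $C$ depending only on $K$ such that for every $\delta\in(0,1)$, with probability at least $1-\delta$, $\|A_{j:i}\|\le C L^3/\delta$ for all $1\le i\le j\le L$.
   Context: $\|\cdot\|$ denotes the spectral norm. *)

theory Defs
  imports "HOL-Probability.Probability"
begin

text \<open>Matrices are represented as functions nat => nat => real together with explicit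
  dimensions; only entries with row index < number of rows and column index < number
  of columns are meaningful.\<close>

definition mat_mult :: "nat \<Rightarrow> (nat \<Rightarrow> nat \<Rightarrow> real) \<Rightarrow> (nat \<Rightarrow> nat \<Rightarrow> real) \<Rightarrow> (nat \<Rightarrow> nat \<Rightarrow> real)" where
  "mat_mult n X Y = (\<lambda>r c. \<Sum>k<n. X r k * Y k c)"

definition spec_norm :: "nat \<Rightarrow> nat \<Rightarrow> (nat \<Rightarrow> nat \<Rightarrow> real) \<Rightarrow> real" where
  "spec_norm m n X = Sup {sqrt (\<Sum>r<m. (\<Sum>c<n. X r c * x c)^2) | x. (\<Sum>c<n. (x c)^2) \<le> 1}"

text \<open>chain A d i k = A_{i+k} A_{i+k-1} ... A_i  (i.e. A_{j:i} with j = i + k),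
  where A_l is a d l x d (l-1) matrix.\<close>
fun mat_chain :: "(nat \<Rightarrow> nat \<Rightarrow> nat \<Rightarrow> real) \<Rightarrow> (nat \<Rightarrow> nat) \<Rightarrow> nat \<Rightarrow> nat \<Rightarrow> (nat \<Rightarrow> nat \<Rightarrow> real)" where
  "mat_chain A d i 0 = A i"
| "mat_chain A d i (Suc k) = mat_mult (d (i + k)) (A (i + Suc k)) (mat_chain A d i k)"

definition mat_prod :: "(nat \<Rightarrow> nat \<Rightarrow> nat \<Rightarrow> real) \<Rightarrow> (nat \<Rightarrow> nat) \<Rightarrow> nat \<Rightarrow> nat \<Rightarrow> (nat \<Rightarrow> nat \<Rightarrow> real)" where
  "mat_prod A d j i = mat_chain A d i (j - i)"

definition entry_idx :: "nat \<Rightarrow> (nat \<Rightarrow> nat) \<Rightarrow> (nat \<times> nat \<times> nat) set" where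
  "entry_idx L d = {(l, r, c). 1 \<le> l \<and> l \<le> L \<and> r < d l \<and> c < d (l - 1)}"

definition gauss_model :: "nat \<Rightarrow> (nat \<Rightarrow> nat) \<Rightarrow> (nat \<Rightarrow> real) \<Rightarrow> (nat \<times> nat \<times> nat \<Rightarrow> real) measure" where
  "gauss_model L d \<sigma> = (\<Pi>\<^sub>M e\<in>entry_idx L d. density lborel (normal_density 0 (\<sigma> (fst e))))"

definition norm_mats :: "(nat \<Rightarrow> nat) \<Rightarrow> (nat \<Rightarrow> real) \<Rightarrow> (nat \<times> nat \<times> nat \<Rightarrow> real) \<Rightarrow> nat \<Rightarrow> nat \<Rightarrow> nat \<Rightarrow> real" where
  "norm_mats d \<sigma> w = (\<lambda>l r c. w (l, r, c) / (sqrt (real (d l)) * \<sigma> l))"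

end

theory Submission
  imports Defs
begin

text \<open>Conditionally on all other layers, the entries of A_l are independent, centred and of
  variance 1/d_l, so E |A_l v|^2 = |v|^2 for every v that does not depend on layer l. Applied
  column by column along the chain, this gives E |A_{j:i}|_F^2 = d_{i-1} \<le> K L. The spectral norm
  is bounded by the Frobenius norm, so Markov's inequality and a union bound over the at most L^2
  pairs (i, j) bound the failure probability for the threshold B by L^2 K L / B^2; for
  B = K L^3 / \<delta> this is \<delta>^2 / (K L^3) \<le> \<delta>, so C = K works.\<close>

definition vec_sqnorm :: "nat \<Rightarrow> (nat \<Rightarrow> real) \<Rightarrow> real" where
  "vec_sqnorm n x = (\<Sum>i<n. (x i)\<^sup>2)"

definition mat_vec :: "nat \<Rightarrow> (nat \<Rightarrow> nat \<Rightarrow> real) \<Rightarrow> (nat \<Rightarrow> real) \<Rightarrow> nat \<Rightarrow> real" where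
  "mat_vec n X x = (\<lambda>r. \<Sum>c<n. X r c * x c)"

definition frob_sqnorm :: "nat \<Rightarrow> nat \<Rightarrow> (nat \<Rightarrow> nat \<Rightarrow> real) \<Rightarrow> real" where
  "frob_sqnorm m n X = (\<Sum>r<m. \<Sum>c<n. (X r c)\<^sup>2)"

lemma vec_sqnorm_nonneg: "vec_sqnorm n x \<ge> 0"
  unfolding vec_sqnorm_def by (intro sum_nonneg) auto

lemma vec_sqnorm_eq_0_iff: "vec_sqnorm n x = 0 \<longleftrightarrow> (\<forall>i<n. x i = 0)"
  unfolding vec_sqnorm_def by (subst sum_nonneg_eq_0_iff) auto

lemma vec_sqnorm_cong: "(\<And>i. i < n \<Longrightarrow> x i = y i) \<Longrightarrow> vec_sqnorm n x = vec_sqnorm n y"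
  unfolding vec_sqnorm_def by simp

lemma mat_vec_cong:
  "(\<And>c. c < n \<Longrightarrow> X r c = Y r c) \<Longrightarrow> (\<And>c. c < n \<Longrightarrow> x c = y c) \<Longrightarrow> mat_vec n X x r = mat_vec n Y y r"
  unfolding mat_vec_def by simp

lemma vec_sqnorm_scale: "vec_sqnorm n (\<lambda>i. a * x i) = a\<^sup>2 * vec_sqnorm n x"
  unfolding vec_sqnorm_def by (simp add: power_mult_distrib sum_distrib_left)

lemma mat_vec_scale: "mat_vec n X (\<lambda>c. a * x c) = (\<lambda>r. a * mat_vec n X x r)"
  unfolding mat_vec_def by (simp add: sum_distrib_left mult_ac)

lemma mat_mult_eq_mat_vec: "mat_mult n X Y r c = mat_vec n X (\<lambda>k. Y k c) r"
  unfolding mat_mult_def mat_vec_def ..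

lemma frob_sqnorm_nonneg: "frob_sqnorm m n X \<ge> 0"
  unfolding frob_sqnorm_def by (intro sum_nonneg) auto

lemma vec_sqnorm_unit: "c < n \<Longrightarrow> vec_sqnorm n (\<lambda>m. if m = c then 1 else 0) = 1"
  unfolding vec_sqnorm_def by (simp add: if_distrib[of "\<lambda>x. x\<^sup>2"] cong: if_cong)

lemma frob_sqnorm_eq_sum_columns: "frob_sqnorm m n X = (\<Sum>c<n. vec_sqnorm m (\<lambda>r. X r c))"
  unfolding frob_sqnorm_def vec_sqnorm_def by (rule sum.swap)

lemma mat_chain_cong:
  assumes "\<And>l r c. i \<le> l \<Longrightarrow> l \<le> i + k \<Longrightarrow> r < d l \<Longrightarrow> c < d (l - 1) \<Longrightarrow> A l r c = A' l r c"
    and "r < d (i + k)" "c < d (i - 1)"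
  shows "mat_chain A d i k r c = mat_chain A' d i k r c"
  using assms
proof (induction k arbitrary: r)
  case (Suc k)
  then show ?case
    unfolding mat_chain.simps mat_mult_def by (intro sum.cong refl) auto
qed simp

lemma vec_sqnorm_mat_vec_le: "vec_sqnorm m (mat_vec n X x) \<le> frob_sqnorm m n X * vec_sqnorm n x"
proof -
  have "vec_sqnorm m (mat_vec n X x) \<le> (\<Sum>r<m. (\<Sum>c<n. (X r c)\<^sup>2) * vec_sqnorm n x)"
    unfolding vec_sqnorm_def mat_vec_def by (intro sum_mono Cauchy_Schwarz_ineq_sum)
  then show ?thesis
    unfolding frob_sqnorm_def by (simp add: sum_distrib_right)
qed

lemma spec_norm_eq_Sup:
  "spec_norm m n X = Sup {sqrt (vec_sqnorm m (mat_vec n X x)) | x. vec_sqnorm n x \<le> 1}"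
  unfolding spec_norm_def vec_sqnorm_def mat_vec_def ..

lemma mat_vec_unit_ball_bound_iff:
  assumes "c \<ge> 0"
  shows "(\<forall>x. vec_sqnorm n x \<le> 1 \<longrightarrow> vec_sqnorm m (mat_vec n X x) \<le> c) \<longleftrightarrow>
    (\<forall>x. vec_sqnorm m (mat_vec n X x) \<le> c * vec_sqnorm n x)"
proof safe
  fix x assume unit: "\<forall>x. vec_sqnorm n x \<le> 1 \<longrightarrow> vec_sqnorm m (mat_vec n X x) \<le> c"
  show "vec_sqnorm m (mat_vec n X x) \<le> c * vec_sqnorm n x"
  proof (cases "vec_sqnorm n x = 0")
    case True
    then have "mat_vec n X x = mat_vec n X (\<lambda>_. 0)"
      by (intro ext mat_vec_cong) (simp_all add: vec_sqnorm_eq_0_iff)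
    then show ?thesis
      using True by (simp add: mat_vec_def vec_sqnorm_def)
  next
    case False
    define s where "s = sqrt (vec_sqnorm n x)"
    have s: "s > 0" "s\<^sup>2 = vec_sqnorm n x"
      using False vec_sqnorm_nonneg[of n x] by (auto simp: s_def)
    have "vec_sqnorm n (\<lambda>c. (1 / s) * x c) = 1"
      using s False vec_sqnorm_scale[of n "1 / s" x] by (simp add: power_divide)
    then have "vec_sqnorm m (mat_vec n X (\<lambda>c. (1 / s) * x c)) \<le> c"
      using unit by simp
    then have "vec_sqnorm m (mat_vec n X x) / vec_sqnorm n x \<le> c"
      using s mat_vec_scale[of n X "1 / s" x] vec_sqnorm_scale[of m "1 / s" "mat_vec n X x"]
      by (simp add: power_divide)
    moreover have "vec_sqnorm n x > 0"
      using False vec_sqnorm_nonneg[of n x] by simp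
    ultimately show ?thesis
      by (simp add: pos_divide_le_eq mult.commute)
  qed
next
  fix x assume "\<forall>x. vec_sqnorm m (mat_vec n X x) \<le> c * vec_sqnorm n x" "vec_sqnorm n x \<le> 1"
  then show "vec_sqnorm m (mat_vec n X x) \<le> c"
    using assms by (metis mult_left_le order_trans)
qed

lemma spec_norm_le_iff:
  assumes "B \<ge> 0"
  shows "spec_norm m n X \<le> B \<longleftrightarrow> (\<forall>x. vec_sqnorm m (mat_vec n X x) \<le> B\<^sup>2 * vec_sqnorm n x)"
proof -
  let ?N = "\<lambda>x. sqrt (vec_sqnorm m (mat_vec n X x))"
  have bdd: "bdd_above {?N x | x. vec_sqnorm n x \<le> 1}"
  proof (rule bdd_aboveI, safe)
    fix x assume "vec_sqnorm n x \<le> 1"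
    then have "frob_sqnorm m n X * vec_sqnorm n x \<le> frob_sqnorm m n X"
      by (simp add: mult_left_le frob_sqnorm_nonneg)
    then show "?N x \<le> sqrt (frob_sqnorm m n X)"
      using vec_sqnorm_mat_vec_le[of m n X x] by simp
  qed
  have "vec_sqnorm n (\<lambda>_. 0) \<le> 1"
    by (simp add: vec_sqnorm_def)
  then have "{?N x | x. vec_sqnorm n x \<le> 1} \<noteq> {}"
    by blast
  then have "spec_norm m n X \<le> B \<longleftrightarrow> (\<forall>x. vec_sqnorm n x \<le> 1 \<longrightarrow> ?N x \<le> B)"
    unfolding spec_norm_eq_Sup by (subst cSup_le_iff[OF _ bdd]) blast+
  also have "\<dots> \<longleftrightarrow> (\<forall>x. vec_sqnorm n x \<le> 1 \<longrightarrow> vec_sqnorm m (mat_vec n X x) \<le> B\<^sup>2)"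
    using real_sqrt_le_iff[of _ "B\<^sup>2"] assms by simp
  also have "\<dots> \<longleftrightarrow> (\<forall>x. vec_sqnorm m (mat_vec n X x) \<le> B\<^sup>2 * vec_sqnorm n x)"
    by (rule mat_vec_unit_ball_bound_iff) simp
  finally show ?thesis .
qed

lemma spec_norm_le_frob: "spec_norm m n X \<le> sqrt (frob_sqnorm m n X)"
  using spec_norm_le_iff[of "sqrt (frob_sqnorm m n X)"] vec_sqnorm_mat_vec_le
  by (simp add: frob_sqnorm_nonneg)

lemma ex_rat_seq_tendsto: "\<exists>q::nat \<Rightarrow> rat. (\<lambda>k. of_rat (q k)) \<longlonglongrightarrow> (y::real)"
proof -
  obtain s where s: "\<forall>k. s k \<in> \<rat>" "s \<longlonglongrightarrow> y"
    using closure_sequential[of y \<rat>] by (auto simp: Rats_closure_real)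
  have "\<forall>k. \<exists>r. s k = of_rat r"
    using s(1) by (auto elim: Rats_cases)
  then obtain q where "s = (\<lambda>k. of_rat (q k))"
    by metis
  with s(2) show ?thesis by blast
qed

text \<open>Restricting to rational test vectors makes the bound a countable condition, which is what
  makes the event of the theorem measurable.\<close>

lemma mat_vec_bound_iff_rat:
  "(\<forall>x. vec_sqnorm m (mat_vec n X x) \<le> c * vec_sqnorm n x) \<longleftrightarrow>
   (\<forall>xs::rat list. vec_sqnorm m (mat_vec n X (\<lambda>i. of_rat (xs ! i)))
                   \<le> c * vec_sqnorm n (\<lambda>i. of_rat (xs ! i)))"
proof (intro iffI allI)
  fix x :: "nat \<Rightarrow> real"
  assume rat_bound: "\<forall>xs::rat list. vec_sqnorm m (mat_vec n X (\<lambda>i. of_rat (xs ! i)))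
                   \<le> c * vec_sqnorm n (\<lambda>i. of_rat (xs ! i))"
  have "\<forall>i. \<exists>qi::nat \<Rightarrow> rat. (\<lambda>k. of_rat (qi k)) \<longlonglongrightarrow> x i"
    using ex_rat_seq_tendsto by blast
  then obtain q :: "nat \<Rightarrow> nat \<Rightarrow> rat" where q: "\<And>i. (\<lambda>k. of_rat (q i k)) \<longlonglongrightarrow> x i"
    by metis
  define y where "y k i = real_of_rat (q i k)" for k i
  have "vec_sqnorm m (mat_vec n X (y k)) \<le> c * vec_sqnorm n (y k)" for k
  proof -
    define xs where "xs = map (\<lambda>i. q i k) [0..<n]"
    have "\<And>i. i < n \<Longrightarrow> of_rat (xs ! i) = y k i"
      by (simp add: xs_def y_def)
    then have "mat_vec n X (\<lambda>i. of_rat (xs ! i)) = mat_vec n X (y k)"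
      "vec_sqnorm n (\<lambda>i. of_rat (xs ! i)) = vec_sqnorm n (y k)"
      by (auto intro!: ext mat_vec_cong vec_sqnorm_cong)
    then show ?thesis
      using rat_bound by metis
  qed
  moreover have "(\<lambda>k. vec_sqnorm m (mat_vec n X (y k))) \<longlonglongrightarrow> vec_sqnorm m (mat_vec n X x)"
    "(\<lambda>k. c * vec_sqnorm n (y k)) \<longlonglongrightarrow> c * vec_sqnorm n x"
    unfolding vec_sqnorm_def mat_vec_def y_def by (intro tendsto_intros q)+
  ultimately show "vec_sqnorm m (mat_vec n X x) \<le> c * vec_sqnorm n x"
    by (intro LIMSEQ_le) auto
qed auto

lemma spec_norm_le_iff_rat:
  assumes "B \<ge> 0"
  shows "spec_norm m n X \<le> B \<longleftrightarrow>
    (\<forall>xs::rat list. vec_sqnorm m (mat_vec n X (\<lambda>i. of_rat (xs ! i)))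
                   \<le> B\<^sup>2 * vec_sqnorm n (\<lambda>i. of_rat (xs ! i)))"
  using spec_norm_le_iff[OF assms] mat_vec_bound_iff_rat by blast

lemma normal_density_moments:
  fixes s :: real
  assumes "s > 0"
  defines "N \<equiv> density lborel (normal_density 0 s)"
  shows "integrable N (\<lambda>x. x)" "integral\<^sup>L N (\<lambda>x. x) = 0"
    and "integrable N (\<lambda>x. x * x)" "integral\<^sup>L N (\<lambda>x. x * x) = s\<^sup>2"
proof -
  have moment: "integrable lborel (\<lambda>x. normal_density 0 s x * x ^ k)" for k
    using integrable_normal_moment[OF \<open>s > 0\<close>, of 0 k] by simp
  show "integrable N (\<lambda>x. x)"
    using moment[of 1] unfolding N_def by (subst integrable_density) auto
  show "integrable N (\<lambda>x. x * x)"
    using moment[of 2] unfolding N_def by (subst integrable_density) (auto simp: power2_eq_square)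
  show "integral\<^sup>L N (\<lambda>x. x) = 0"
    using integral_normal_moment_nz_1[OF \<open>s > 0\<close>, of 0] unfolding N_def by (subst integral_density) auto
  show "integral\<^sup>L N (\<lambda>x. x * x) = s\<^sup>2"
    using integral_normal_moment_even[OF \<open>s > 0\<close>, of 0 1] unfolding N_def
    by (subst integral_density) (auto simp: power2_eq_square)
qed

lemma finite_entry_idx: "finite (entry_idx L d)"
  by (rule finite_subset[of _ "(SIGMA l:{..L}. {..<d l} \<times> {..<d (l - 1)})"]) (auto simp: entry_idx_def)

locale gaussian_layers =
  fixes L :: nat and d :: "nat \<Rightarrow> nat" and \<sigma> :: "nat \<Rightarrow> real"
  assumes sigma_pos: "\<And>l. 1 \<le> l \<Longrightarrow> l \<le> L \<Longrightarrow> \<sigma> l > 0"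
    and dim_pos: "\<And>l. l \<le> L \<Longrightarrow> d l > 0"
begin

text \<open>Indices outside entry_idx L d get the dummy law N(0,1), so that every factor is a
  probability space; the product over entry_idx L d is unaffected.\<close>

definition entry_sd :: "nat \<times> nat \<times> nat \<Rightarrow> real" where
  "entry_sd e = (if e \<in> entry_idx L d then \<sigma> (fst e) else 1)"

definition entry_law :: "nat \<times> nat \<times> nat \<Rightarrow> real measure" where
  "entry_law e = density lborel (normal_density 0 (entry_sd e))"

abbreviation weight_space :: "(nat \<times> nat \<times> nat \<Rightarrow> real) measure" where
  "weight_space \<equiv> PiM (entry_idx L d) entry_law"

lemma entry_sd_pos: "entry_sd e > 0"
  using sigma_pos unfolding entry_sd_def entry_idx_def by auto

lemma prob_space_entry_law: "prob_space (entry_law e)"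
  unfolding entry_law_def by (rule prob_space_normal_density[OF entry_sd_pos])

sublocale product_sigma_finite entry_law
  unfolding product_sigma_finite_def using prob_space_entry_law prob_space_imp_sigma_finite by blast

lemma prob_space_PiM_entry_law: "prob_space (PiM J entry_law)"
  by (rule prob_space_PiM) (rule prob_space_entry_law)

lemma sets_entry_law [simp]: "sets (entry_law e) = sets borel"
  unfolding entry_law_def by simp

lemma gauss_model_eq: "gauss_model L d \<sigma> = weight_space"
  unfolding gauss_model_def entry_law_def entry_sd_def by (intro PiM_cong) auto

lemma measurable_entry [measurable]: "(\<lambda>w. w e) \<in> borel_measurable (PiM J entry_law)"
proof (cases "e \<in> J")
  case True
  then have "(\<lambda>w. w e) \<in> measurable (PiM J entry_law) (entry_law e)"
    by (rule measurable_component_singleton)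
  then show ?thesis
    by (simp only: measurable_cong_sets[OF refl sets_entry_law])
next
  case False
  have "(\<lambda>w. undefined) \<in> borel_measurable (PiM J entry_law)"
    by simp
  then show ?thesis
    by (rule measurable_cong[THEN iffD1, rotated]) (metis False PiE_arb space_PiM)
qed

lemma entry_law_moments:
  "integrable (entry_law e) (\<lambda>x. x)" "integral\<^sup>L (entry_law e) (\<lambda>x. x) = 0"
  "integrable (entry_law e) (\<lambda>x. x * x)" "integral\<^sup>L (entry_law e) (\<lambda>x. x * x) = (entry_sd e)\<^sup>2"
  unfolding entry_law_def by (rule normal_density_moments[OF entry_sd_pos])+

lemma entry_moment:
  assumes "finite J" "e \<in> J" "e' \<in> J"
  shows "has_bochner_integral (PiM J entry_law) (\<lambda>w. w e * w e') (if e = e' then (entry_sd e)\<^sup>2 else 0)"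
proof -
  define f where "f i t = (if i = e then t else 1) * (if i = e' then t else 1)" for i and t :: real
  have prod_f: "(\<Prod>i\<in>J. f i (w i)) = w e * w e'" for w
    unfolding f_def prod.distrib using assms by (simp add: prod.delta)
  have f_cases: "f i = (if i = e \<and> i = e' then (\<lambda>t. t * t) else if i = e \<or> i = e' then (\<lambda>t. t) else (\<lambda>t. 1))" for i
    by (auto simp: f_def)
  have f_integrable: "integrable (entry_law i) (f i)"
    and f_integral: "integral\<^sup>L (entry_law i) (f i) =
      (if i = e \<and> i = e' then (entry_sd i)\<^sup>2 else if i = e \<or> i = e' then 0 else 1)" for i
  proof -
    interpret prob_space "entry_law i"
      by (rule prob_space_entry_law)
    show "integrable (entry_law i) (f i)"
      by (cases "i = e"; cases "i = e'") (simp_all add: f_cases entry_law_moments)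
    show "integral\<^sup>L (entry_law i) (f i) =
      (if i = e \<and> i = e' then (entry_sd i)\<^sup>2 else if i = e \<or> i = e' then 0 else 1)"
      by (cases "i = e"; cases "i = e'") (simp_all add: f_cases entry_law_moments prob_space)
  qed
  have "(\<Prod>i\<in>J. integral\<^sup>L (entry_law i) (f i)) = (if e = e' then (entry_sd e)\<^sup>2 else 0)"
    using assms by (auto simp: f_integral if_distrib prod.If_cases)
  then show ?thesis
    using product_integrable_prod[OF assms(1) f_integrable] product_integral_prod[OF assms(1) f_integrable]
    by (simp add: has_bochner_integral_iff prod_f)
qed

definition layer :: "nat \<Rightarrow> (nat \<times> nat \<times> nat) set" where
  "layer l = {e \<in> entry_idx L d. fst e = l}"

lemma mem_layer_iff:
  "(l', r, c) \<in> layer l \<longleftrightarrow> l' = l \<and> 1 \<le> l \<and> l \<le> L \<and> r < d l \<and> c < d (l - 1)"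
  unfolding layer_def entry_idx_def by auto

lemma nn_integral_layer_sqnorm:
  assumes l: "1 \<le> l" "l \<le> L"
  shows "(\<integral>\<^sup>+w. ennreal (vec_sqnorm (d l) (mat_vec (d (l - 1)) (norm_mats d \<sigma> w l) u))
           \<partial>PiM (layer l) entry_law) = ennreal (vec_sqnorm (d (l - 1)) u)"
proof -
  let ?P = "PiM (layer l) entry_law"
  define n where "n = d (l - 1)"
  define D where "D = sqrt (real (d l)) * \<sigma> l"
  have D2: "D\<^sup>2 = real (d l) * (\<sigma> l)\<^sup>2"
    by (simp add: D_def power_mult_distrib)
  have fin: "finite (layer l)"
    by (rule finite_subset[of _ "{l} \<times> {..<d l} \<times> {..<n}"]) (auto simp: layer_def entry_idx_def n_def)
  have sd: "entry_sd (l, r, m) = \<sigma> l" if "r < d l" "m < n" for r m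
    using that l by (simp add: entry_sd_def entry_idx_def n_def)
  define a where "a m m' = u m * u m' / D\<^sup>2" for m m'
  define g where "g w = (\<Sum>r<d l. \<Sum>m<n. \<Sum>m'<n. a m m' * (w (l, r, m) * w (l, r, m')))" for w
  have expand: "vec_sqnorm (d l) (mat_vec n (norm_mats d \<sigma> w l) u) = g w" for w
    unfolding g_def a_def vec_sqnorm_def mat_vec_def norm_mats_def D_def[symmetric] power2_eq_square sum_product
    by (intro sum.cong refl) (simp add: field_simps)
  have "has_bochner_integral ?P (\<lambda>w. w (l, r, m) * w (l, r, m')) (if m = m' then (\<sigma> l)\<^sup>2 else 0)"
    if "r < d l" "m < n" "m' < n" for r m m'
    using that l sd[OF that(1,2)] entry_moment[OF fin, of "(l, r, m)" "(l, r, m')"] by (auto simp: mem_layer_iff n_def)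
  then have "has_bochner_integral ?P g (\<Sum>r<d l. \<Sum>m<n. \<Sum>m'<n. a m m' * (if m = m' then (\<sigma> l)\<^sup>2 else 0))"
    unfolding g_def by (intro has_bochner_integral_sum has_bochner_integral_mult_right) auto
  moreover have "(\<Sum>r<d l. \<Sum>m<n. \<Sum>m'<n. a m m' * (if m = m' then (\<sigma> l)\<^sup>2 else 0)) = vec_sqnorm n u"
    using D2 dim_pos[OF l(2)] sigma_pos[OF l]
    by (simp add: a_def if_distrib sum.delta vec_sqnorm_def sum_distrib_left power2_eq_square field_simps cong: if_cong)
  moreover have "AE w in ?P. 0 \<le> g w"
    unfolding expand[symmetric] by (simp add: vec_sqnorm_nonneg)
  ultimately show ?thesis
    unfolding expand n_def[symmetric] by (simp add: has_bochner_integral_iff nn_integral_eq_integral)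
qed

lemma nn_integral_layer_step:
  assumes l: "1 \<le> l" "l \<le> L"
    and V_meas: "\<And>m. (\<lambda>w. V w m) \<in> borel_measurable weight_space"
    and V_indep: "\<And>w w' m. (\<And>e. e \<in> entry_idx L d \<Longrightarrow> fst e \<noteq> l \<Longrightarrow> w e = w' e) \<Longrightarrow>
      m < d (l - 1) \<Longrightarrow> V w m = V w' m"
  shows "(\<integral>\<^sup>+w. ennreal (vec_sqnorm (d l) (mat_vec (d (l - 1)) (norm_mats d \<sigma> w l) (V w))) \<partial>weight_space)
       = (\<integral>\<^sup>+w. ennreal (vec_sqnorm (d (l - 1)) (V w)) \<partial>weight_space)"
proof -
  define n where "n = d (l - 1)"
  define rest where "rest = {e \<in> entry_idx L d. fst e \<noteq> l}"
  have split: "entry_idx L d = rest \<union> layer l" "rest \<inter> layer l = {}"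
    unfolding rest_def layer_def by auto
  have fin: "finite rest" "finite (layer l)"
    using finite_entry_idx[of L d] unfolding split(1) by auto
  note V_meas[measurable]
  have fold: "integral\<^sup>N weight_space f =
      (\<integral>\<^sup>+y. (\<integral>\<^sup>+x. f (merge rest (layer l) (y, x)) \<partial>PiM (layer l) entry_law) \<partial>PiM rest entry_law)"
    if "f \<in> borel_measurable weight_space" for f
    using product_nn_integral_fold[OF split(2) fin, of f] that by (simp add: split(1))
  have V_merge: "V (merge rest (layer l) (y, x)) m = V y m" if "m < n" for y x m
    using that split(2) by (intro V_indep) (auto simp: rest_def n_def)
  have A_merge: "norm_mats d \<sigma> (merge rest (layer l) (y, x)) l r m = norm_mats d \<sigma> x l r m"
    if "r < d l" "m < n" for y x r m
    using that l split(2) by (auto simp: norm_mats_def mem_layer_iff n_def)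
  have "(\<lambda>w. ennreal (vec_sqnorm (d l) (mat_vec n (norm_mats d \<sigma> w l) (V w)))) \<in> borel_measurable weight_space"
    "(\<lambda>w. ennreal (vec_sqnorm n (V w))) \<in> borel_measurable weight_space"
    unfolding vec_sqnorm_def mat_vec_def norm_mats_def by measurable
  note fold = this[THEN fold]
  have "(\<integral>\<^sup>+w. ennreal (vec_sqnorm (d l) (mat_vec n (norm_mats d \<sigma> w l) (V w))) \<partial>weight_space)
      = (\<integral>\<^sup>+y. (\<integral>\<^sup>+x. ennreal (vec_sqnorm (d l) (mat_vec n (norm_mats d \<sigma> x l) (V y)))
           \<partial>PiM (layer l) entry_law) \<partial>PiM rest entry_law)"
    unfolding fold(1) by (intro nn_integral_cong arg_cong[where f = ennreal] vec_sqnorm_cong mat_vec_cong V_merge A_merge)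
  also have "\<dots> = (\<integral>\<^sup>+y. ennreal (vec_sqnorm n (V y)) \<partial>PiM rest entry_law)"
    unfolding n_def by (intro nn_integral_cong nn_integral_layer_sqnorm l)
  also have "\<dots> = (\<integral>\<^sup>+y. (\<integral>\<^sup>+x. ennreal (vec_sqnorm n (V (merge rest (layer l) (y, x))))
           \<partial>PiM (layer l) entry_law) \<partial>PiM rest entry_law)"
  proof (intro nn_integral_cong)
    fix y
    have "vec_sqnorm n (V (merge rest (layer l) (y, x))) = vec_sqnorm n (V y)" for x
      by (intro vec_sqnorm_cong V_merge)
    then show "ennreal (vec_sqnorm n (V y)) =
        (\<integral>\<^sup>+x. ennreal (vec_sqnorm n (V (merge rest (layer l) (y, x)))) \<partial>PiM (layer l) entry_law)"
      using prob_space.emeasure_space_1[OF prob_space_PiM_entry_law] by (simp add: nn_integral_const)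
  qed
  also have "\<dots> = (\<integral>\<^sup>+w. ennreal (vec_sqnorm n (V w)) \<partial>weight_space)"
    unfolding fold(2) ..
  finally show ?thesis
    unfolding n_def .
qed

lemma measurable_norm_mats [measurable]:
  "(\<lambda>w. norm_mats d \<sigma> w l r c) \<in> borel_measurable (PiM J entry_law)"
  unfolding norm_mats_def by measurable

lemma measurable_mat_chain [measurable]:
  "(\<lambda>w. mat_chain (norm_mats d \<sigma> w) d i k r c) \<in> borel_measurable (PiM J entry_law)"
proof (induction k arbitrary: r)
  case (Suc k)
  note Suc[measurable]
  show ?case
    unfolding mat_chain.simps mat_mult_def by measurable
qed simp

lemma measurable_mat_prod [measurable]:
  "(\<lambda>w. mat_prod (norm_mats d \<sigma> w) d j i r c) \<in> borel_measurable (PiM J entry_law)"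
  unfolding mat_prod_def by measurable

lemma nn_integral_chain_column:
  assumes "1 \<le> i" "i + k \<le> L" "c < d (i - 1)"
  shows "(\<integral>\<^sup>+w. ennreal (vec_sqnorm (d (i + k)) (\<lambda>r. mat_chain (norm_mats d \<sigma> w) d i k r c)) \<partial>weight_space) = 1"
  using assms
proof (induction k)
  case 0
  define e where "e = (\<lambda>m. if m = c then 1 else 0 :: real)"
  have "mat_chain (norm_mats d \<sigma> w) d i 0 r c = mat_vec (d (i - 1)) (norm_mats d \<sigma> w i) e r" for w r
    using 0 by (simp add: mat_vec_def e_def if_distrib cong: if_cong)
  then have "(\<integral>\<^sup>+w. ennreal (vec_sqnorm (d (i + 0)) (\<lambda>r. mat_chain (norm_mats d \<sigma> w) d i 0 r c)) \<partial>weight_space)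
      = (\<integral>\<^sup>+w. ennreal (vec_sqnorm (d i) (mat_vec (d (i - 1)) (norm_mats d \<sigma> w i) e)) \<partial>weight_space)"
    by simp
  also have "\<dots> = (\<integral>\<^sup>+w. ennreal (vec_sqnorm (d (i - 1)) e) \<partial>weight_space)"
    by (rule nn_integral_layer_step) (use 0 in auto)
  also have "\<dots> = 1"
    using 0 prob_space.emeasure_space_1[OF prob_space_PiM_entry_law]
    by (simp add: vec_sqnorm_unit e_def nn_integral_const)
  finally show ?case .
next
  case (Suc k)
  let ?A = "\<lambda>w. norm_mats d \<sigma> w" and ?l = "i + Suc k"
  have column: "(\<lambda>r. mat_chain (?A w) d i (Suc k) r c) = mat_vec (d (?l - 1)) (?A w ?l) (\<lambda>m. mat_chain (?A w) d i k m c)" for w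
    by (simp add: mat_mult_eq_mat_vec)
  have indep: "mat_chain (?A w) d i k m c = mat_chain (?A w') d i k m c"
    if "\<And>e. e \<in> entry_idx L d \<Longrightarrow> fst e \<noteq> ?l \<Longrightarrow> w e = w' e" "m < d (?l - 1)" for w w' m
    using Suc.prems that by (intro mat_chain_cong) (auto simp: norm_mats_def entry_idx_def)
  have "(\<integral>\<^sup>+w. ennreal (vec_sqnorm (d (i + Suc k)) (\<lambda>r. mat_chain (?A w) d i (Suc k) r c)) \<partial>weight_space)
      = (\<integral>\<^sup>+w. ennreal (vec_sqnorm (d (?l - 1)) (\<lambda>m. mat_chain (?A w) d i k m c)) \<partial>weight_space)"
    unfolding column using Suc.prems by (intro nn_integral_layer_step indep) auto
  then show ?case
    using Suc by simp
qed

lemma nn_integral_frob_mat_prod: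
  assumes "1 \<le> i" "i \<le> j" "j \<le> L"
  shows "(\<integral>\<^sup>+w. ennreal (frob_sqnorm (d j) (d (i - 1)) (mat_prod (norm_mats d \<sigma> w) d j i)) \<partial>weight_space)
    = real (d (i - 1))"
proof -
  obtain k where j: "j = i + k"
    using assms(2) le_Suc_ex by blast
  let ?col = "\<lambda>w c. vec_sqnorm (d (i + k)) (\<lambda>r. mat_chain (norm_mats d \<sigma> w) d i k r c)"
  have "(\<integral>\<^sup>+w. ennreal (frob_sqnorm (d j) (d (i - 1)) (mat_prod (norm_mats d \<sigma> w) d j i)) \<partial>weight_space)
      = (\<integral>\<^sup>+w. (\<Sum>c<d (i - 1). ennreal (?col w c)) \<partial>weight_space)"
    by (simp add: j mat_prod_def frob_sqnorm_eq_sum_columns vec_sqnorm_nonneg sum_ennreal)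
  also have "\<dots> = (\<Sum>c<d (i - 1). \<integral>\<^sup>+w. ennreal (?col w c) \<partial>weight_space)"
    by (rule nn_integral_sum) (simp add: vec_sqnorm_def)
  also have "\<dots> = real (d (i - 1))"
    using assms by (simp add: j nn_integral_chain_column ennreal_of_nat_eq_real_of_nat)
  finally show ?thesis .
qed

lemma prob_frob_mat_prod_ge:
  assumes "1 \<le> i" "i \<le> j" "j \<le> L" "t > 0"
  shows "measure weight_space {w \<in> space weight_space. t \<le> frob_sqnorm (d j) (d (i - 1)) (mat_prod (norm_mats d \<sigma> w) d j i)}
    \<le> real (d (i - 1)) / t"
proof -
  let ?F = "\<lambda>w. frob_sqnorm (d j) (d (i - 1)) (mat_prod (norm_mats d \<sigma> w) d j i)"
  have meas: "?F \<in> borel_measurable weight_space"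
    unfolding frob_sqnorm_def by measurable
  have nonneg: "AE w in weight_space. 0 \<le> ?F w"
    by (simp add: frob_sqnorm_nonneg)
  have "has_bochner_integral weight_space ?F (real (d (i - 1)))"
    using nn_integral_frob_mat_prod[OF assms(1-3)] by (intro has_bochner_integral_nn_integral meas nonneg) auto
  then show ?thesis
    using integral_Markov_inequality_measure[OF _ sets.top nonneg \<open>t > 0\<close>]
    by (simp add: has_bochner_integral_iff)
qed

lemma sets_spec_norm_mat_prod_le:
  assumes "B \<ge> 0"
  shows "{w \<in> space weight_space. \<forall>i j. 1 \<le> i \<and> i \<le> j \<and> j \<le> L \<longrightarrow>
      spec_norm (d j) (d (i - 1)) (mat_prod (norm_mats d \<sigma> w) d j i) \<le> B} \<in> sets weight_space"
proof -
  have [measurable]: "(\<lambda>w. vec_sqnorm m (mat_vec n (mat_prod (norm_mats d \<sigma> w) d j i) x)) \<in> borel_measurable weight_space"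
    for m n j i x
    unfolding vec_sqnorm_def mat_vec_def by measurable
  show ?thesis
    unfolding spec_norm_le_iff_rat[OF assms] by measurable
qed

definition index_pairs :: "(nat \<times> nat) set" where
  "index_pairs = {(i, j). 1 \<le> i \<and> i \<le> j \<and> j \<le> L}"

lemma index_pairs_subset: "index_pairs \<subseteq> {1..L} \<times> {1..L}"
  by (auto simp: index_pairs_def)

lemma finite_index_pairs: "finite index_pairs"
  using index_pairs_subset by (rule finite_subset) simp

lemma prob_some_frob_mat_prod_ge:
  assumes t: "t > 0" and dims: "\<And>l. l < L \<Longrightarrow> real (d l) \<le> D"
  shows "measure weight_space (\<Union>(i, j)\<in>index_pairs.
      {w \<in> space weight_space. t \<le> frob_sqnorm (d j) (d (i - 1)) (mat_prod (norm_mats d \<sigma> w) d j i)})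
    \<le> real L ^ 2 * D / t"
proof -
  interpret prob_space weight_space
    by (rule prob_space_PiM_entry_law)
  let ?bad = "\<lambda>(i, j). {w \<in> space weight_space. t \<le> frob_sqnorm (d j) (d (i - 1)) (mat_prod (norm_mats d \<sigma> w) d j i)}"
  have "prob (\<Union>p\<in>index_pairs. ?bad p) \<le> (\<Sum>p\<in>index_pairs. prob (?bad p))"
    by (rule measure_UNION_le[OF finite_index_pairs]) (auto simp: frob_sqnorm_def)
  also have "\<dots> \<le> (\<Sum>p\<in>index_pairs. D / t)"
  proof (rule sum_mono)
    fix p assume "p \<in> index_pairs"
    then obtain i j where p: "p = (i, j)" "1 \<le> i" "i \<le> j" "j \<le> L"
      by (auto simp: index_pairs_def)
    then have "prob (?bad p) \<le> real (d (i - 1)) / t"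
      using prob_frob_mat_prod_ge[of i j t] t by simp
    also have "\<dots> \<le> D / t"
      using p t dims[of "i - 1"] by (simp add: divide_right_mono)
    finally show "prob (?bad p) \<le> D / t" .
  qed
  also have "\<dots> \<le> real L ^ 2 * D / t"
  proof (cases "L = 0")
    case True
    then have "index_pairs = {}"
      using index_pairs_subset by auto
    then show ?thesis
      using True by simp
  next
    case False
    then have "D \<ge> 0"
      using dims[of 0] by simp
    moreover have "card index_pairs \<le> L ^ 2"
      using card_mono[OF _ index_pairs_subset] by (simp add: power2_eq_square)
    ultimately show ?thesis
      using t by (simp add: mult_right_mono divide_right_mono)
  qed
  finally show ?thesis .
qed

lemma prob_spec_norm_mat_prod_le:
  assumes B: "B > 0" and dims: "\<And>l. l < L \<Longrightarrow> real (d l) \<le> D"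
  shows "measure weight_space {w \<in> space weight_space. \<forall>i j. 1 \<le> i \<and> i \<le> j \<and> j \<le> L \<longrightarrow>
      spec_norm (d j) (d (i - 1)) (mat_prod (norm_mats d \<sigma> w) d j i) \<le> B} \<ge> 1 - real L ^ 2 * D / B\<^sup>2"
    (is "measure _ ?good \<ge> _")
proof -
  interpret prob_space weight_space
    by (rule prob_space_PiM_entry_law)
  let ?F = "\<lambda>i j w. frob_sqnorm (d j) (d (i - 1)) (mat_prod (norm_mats d \<sigma> w) d j i)"
  let ?bad = "\<Union>(i, j)\<in>index_pairs. {w \<in> space weight_space. B\<^sup>2 \<le> ?F i j w}"
  have "?bad \<in> events"
    using finite_index_pairs by (auto simp: frob_sqnorm_def)
  then have "1 - prob ?bad = prob (space weight_space - ?bad)"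
    by (simp add: prob_compl)
  also have "\<dots> \<le> prob ?good"
  proof (intro finite_measure_mono sets_spec_norm_mat_prod_le subsetI CollectI conjI allI impI)
    fix w i j assume w: "w \<in> space weight_space - ?bad" and ij: "1 \<le> i \<and> i \<le> j \<and> j \<le> L"
    then have "sqrt (?F i j w) \<le> B"
      using B real_sqrt_le_iff[of "?F i j w" "B\<^sup>2"] by (force simp: index_pairs_def)
    then show "spec_norm (d j) (d (i - 1)) (mat_prod (norm_mats d \<sigma> w) d j i) \<le> B"
      using spec_norm_le_frob order_trans by blast
  qed (use B in auto)
  finally show ?thesis
    using prob_some_frob_mat_prod_ge[OF _ dims, of "B\<^sup>2"] B by simp
qed

end

theorem lemma5p1:
  fixes K :: real
  assumes "K \<ge> 1"
  shows "\<exists>C::real. \<forall>(\<gamma>::real) (L::nat) (d::nat \<Rightarrow> nat) (\<sigma>::nat \<Rightarrow> real) (\<delta>::real).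
           0 < \<gamma> \<and> \<gamma> \<le> 1 \<and> L \<ge> 1 \<and> (\<forall>l\<le>L. d l > 0)
           \<and> (\<forall>l\<le>L. real (d l) \<le> K * real L powr (1 - \<gamma>))
           \<and> (\<forall>l\<in>{1..L}. \<sigma> l > 0) \<and> 0 < \<delta> \<and> \<delta> < 1
         \<longrightarrow> measure (gauss_model L d \<sigma>)
               {w \<in> space (gauss_model L d \<sigma>). \<forall>i j. 1 \<le> i \<and> i \<le> j \<and> j \<le> L \<longrightarrow>
                  spec_norm (d j) (d (i - 1)) (mat_prod (norm_mats d \<sigma> w) d j i)
                    \<le> C * real L ^ 3 / \<delta>}
             \<ge> 1 - \<delta>"
proof (intro exI[of _ K] allI impI, elim conjE)
  fix \<gamma> \<delta> :: real and L :: nat and d :: "nat \<Rightarrow> nat" and \<sigma> :: "nat \<Rightarrow> real"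
  assume \<gamma>: "0 < \<gamma>" "\<gamma> \<le> 1" and L: "L \<ge> 1" and d_pos: "\<forall>l\<le>L. d l > 0"
    and d_le: "\<forall>l\<le>L. real (d l) \<le> K * real L powr (1 - \<gamma>)"
    and \<sigma>_pos: "\<forall>l\<in>{1..L}. \<sigma> l > 0" and \<delta>: "0 < \<delta>" "\<delta> < 1"
  interpret gaussian_layers L d \<sigma>
    using \<sigma>_pos d_pos by unfold_locales auto
  have "real L powr (1 - \<gamma>) \<le> real L"
    using L \<gamma> powr_mono[of "1 - \<gamma>" 1 "real L"] by simp
  then have dims: "real (d l) \<le> K * real L" if "l < L" for l
    using d_le that assms by (meson less_imp_le mult_left_mono order_trans zero_le_one)
  have "1 \<le> real L ^ 3"
    using L by (simp add: one_le_power)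
  then have KL: "1 \<le> K * real L ^ 3"
    using assms mult_mono[of 1 K 1 "real L ^ 3"] by simp
  have "1 - \<delta> \<le> 1 - \<delta>\<^sup>2 / (K * real L ^ 3)"
    using KL \<delta> by (simp add: divide_le_eq power2_eq_square mult_le_cancel_left1 order_trans)
  also have "\<dots> = 1 - real L ^ 2 * (K * real L) / (K * real L ^ 3 / \<delta>)\<^sup>2"
    using KL \<delta> by (simp add: power2_eq_square power3_eq_cube field_simps)
  also have "\<dots> \<le> measure weight_space {w \<in> space weight_space. \<forall>i j. 1 \<le> i \<and> i \<le> j \<and> j \<le> L \<longrightarrow>
      spec_norm (d j) (d (i - 1)) (mat_prod (norm_mats d \<sigma> w) d j i) \<le> K * real L ^ 3 / \<delta>}"
    using KL \<delta> by (intro prob_spec_norm_mat_prod_le dims) auto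
  finally show "1 - \<delta> \<le> measure (gauss_model L d \<sigma>) {w \<in> space (gauss_model L d \<sigma>). \<forall>i j. 1 \<le> i \<and> i \<le> j \<and> j \<le> L \<longrightarrow>
      spec_norm (d j) (d (i - 1)) (mat_prod (norm_mats d \<sigma> w) d j i) \<le> K * real L ^ 3 / \<delta>}"
    unfolding gauss_model_eq .
qed

end
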